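(* Suppose Assumption D holds. Let $P\in\Delta(\Theta,\mathcal{B})$, $\eta>0$, let $E$ be a Borel set with $p:=P(E)\in(0,1)$, and let $p^{\min}:=\inf_Q\{Q(E):Q\in\Delta(\Theta,\mathcal{B}),\,D(Q\|P)\le\eta\}$. Define $Q^*\in\Delta(\Theta,\mathcal{B})$ by $\frac{dQ^*}{dP}=\frac{p^{\min}}{p}\mathbf{1}_E+\frac{1-p^{\min}}{1-p}\mathbf{1}_{\Theta\setminus E}$. Then $Q^*$ is a minimizer of this problem, i.e. $D(Q^*\|P)\le\eta$ and $Q^*(E)=p^{\min}$.
   Context: $\Theta=[\underline\theta,\bar\theta]\subset\mathbb{R}$, Borel $\sigma$-algebra $\mathcal{B}$; "$\sigma$-algebra" means sub-$\sigma$-algebra of $\mathcal{B}$; $\Delta(\Theta,\mathcal{A})$ is the set of probability measures on $(\Theta,\mathcal{A})$; $P_{\mathcal{E}}$ is restriction. A divergence $D$ assigns to each pair $Q,P$ of probability measures on a common $\sigma$-algebra a value $D(Q\|P)\in[0,\infty]$. Assumption D: for every $\sigma$-algebra $\mathcal{A}$, $P,Q\in\Delta(\Theta,\mathcal{A})$: (D1) $D(Q\|P)=0$ if $Q=P$; (D2) if $Q\ll P$ with bounded $dQ/dP$, $\epsilon\mapsto D(\epsilon Q+(1-\epsilon)P\|P)$ is continuous on $[0,1]$; (D3) $D(Q\|P)<\infty\Rightarrow Q\ll P$; (D4) $D(Q_{\mathcal{E}}\|P_{\mathcal{E}})\le D(Q\|P)$ for sub-$\sigma$-algebras $\mathcal{E}\subset\mathcal{A}$;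 (D5) equality in (D4) when $dQ_{\mathcal{E}}/dP_{\mathcal{E}}=dQ/dP$ $P$-a.e. *)

theory Defs
  imports "HOL-Probability.Probability"
begin

definition Theta :: "real \<Rightarrow> real \<Rightarrow> real set" where
  "Theta lo hi = {lo..hi}"

definition Borel_Theta :: "real \<Rightarrow> real \<Rightarrow> real set set" where
  "Borel_Theta lo hi = sets (restrict_space borel (Theta lo hi))"

text \<open>A "sigma-algebra" in the paper: a sub-sigma-algebra of the Borel sets of Theta.\<close>
definition is_subsigma :: "real \<Rightarrow> real \<Rightarrow> real set set \<Rightarrow> bool" where
  "is_subsigma lo hi A \<longleftrightarrow> sigma_algebra (Theta lo hi) A \<and> A \<subseteq> Borel_Theta lo hi"

definition Delta :: "real \<Rightarrow> real \<Rightarrow> real set set \<Rightarrow> real measure set" where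
  "Delta lo hi A = {M. prob_space M \<and> space M = Theta lo hi \<and> sets M = A}"

definition restr :: "real measure \<Rightarrow> real set set \<Rightarrow> real measure" where
  "restr M E = measure_of (space M) E (emeasure M)"

definition mix :: "real \<Rightarrow> real measure \<Rightarrow> real measure \<Rightarrow> real measure" where
  "mix eps Q P = measure_of (space P) (sets P)
     (\<lambda>S. ennreal eps * emeasure Q S + ennreal (1 - eps) * emeasure P S)"

text \<open>Assumption D for a divergence D (values in [0, infinity]).  The argument order is
  D Q P = D(Q || P).\<close>
definition assumption_D ::
  "real \<Rightarrow> real \<Rightarrow> (real measure \<Rightarrow> real measure \<Rightarrow> ennreal) \<Rightarrow> bool" where
  "assumption_D lo hi D \<longleftrightarrow>
    (\<forall>A P Q. is_subsigma lo hi A \<longrightarrow> P \<in> Delta lo hi A \<longrightarrow> Q \<in> Delta lo hi A \<longrightarrow>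
       \<comment> \<open>(D1)\<close>
       (Q = P \<longrightarrow> D Q P = 0) \<and>
       \<comment> \<open>(D2)\<close>
       ((\<exists>f C. f \<in> borel_measurable P \<and> (\<forall>x\<in>space P. f x \<le> ennreal C) \<and> Q = density P f)
          \<longrightarrow> continuous_on {0..1} (\<lambda>eps. D (mix eps Q P) P)) \<and>
       \<comment> \<open>(D3)\<close>
       (D Q P < \<infinity> \<longrightarrow> absolutely_continuous P Q) \<and>
       \<comment> \<open>(D4) and (D5)\<close>
       (\<forall>E. is_subsigma lo hi E \<longrightarrow> E \<subseteq> A \<longrightarrow>
          D (restr Q E) (restr P E) \<le> D Q P \<and>
          ((absolutely_continuous P Q \<and>
            (AE x in P. RN_deriv (restr P E) (restr Q E) x = RN_deriv P Q x))
             \<longrightarrow> D (restr Q E) (restr P E) = D Q P)))"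

end

theory Submission
  imports Defs
begin

text \<open>Write \<open>Q\<^sub>t\<close> for the measure with density \<open>t / P(E)\<close> on \<open>E\<close> and \<open>(1 - t) / (1 - P(E))\<close>
  off \<open>E\<close>, so that \<open>Q* = Q\<^sub>p\<^sub>m\<^sub>i\<^sub>n\<close>. For feasible \<open>Q\<close> and \<open>t = Q(E)\<close>, the density of \<open>Q\<^sub>t\<close> is
  measurable for the four-set algebra generated by \<open>E\<close>, on which \<open>Q\<^sub>t\<close> and \<open>Q\<close> agree, so (D5)
  and (D4) give \<open>D(Q\<^sub>t\<parallel>P) \<le> D(Q\<parallel>P) \<le> \<eta>\<close>. Mixtures of \<open>Q\<^sub>t\<close> with \<open>P\<close> are again of the form
  \<open>Q\<^sub>s\<close>, so (D2) makes \<open>s \<mapsto> D(Q\<^sub>s\<parallel>P)\<close> continuous on \<open>[pmin, P(E)]\<close>. As \<open>P(E)\<close> is itself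
  feasible, feasible values accumulate at \<open>pmin\<close> inside this interval, and the sublevel set
  \<open>{D \<le> \<eta>}\<close> is closed.\<close>

lemma le_at_Inf_if_continuous_on:
  fixes \<phi> :: "real \<Rightarrow> 'b::linorder_topology"
  assumes cont: "continuous_on {Inf S..b} \<phi>" and "b \<in> S" "bdd_below S"
    and le: "\<And>q. q \<in> S \<Longrightarrow> q \<le> b \<Longrightarrow> \<phi> q \<le> c"
  shows "\<phi> (Inf S) \<le> c"
proof -
  define T where "T = S \<inter> {..b}"
  have "T \<noteq> {}" "bdd_below T"
    using assms by (auto simp: T_def bdd_below_def)
  have "Inf T = Inf S"
  proof (rule antisym)
    show "Inf S \<le> Inf T"
      using \<open>bdd_below S\<close> by (intro cInf_greatest \<open>T \<noteq> {}\<close>) (simp add: T_def cInf_lower)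
    have "Inf T \<le> q" if "q \<in> S" for q
    proof (cases "q \<le> b")
      case True
      then show ?thesis using that \<open>bdd_below T\<close> by (simp add: T_def cInf_lower)
    next
      case False
      have "Inf T \<le> b" using \<open>b \<in> S\<close> \<open>bdd_below T\<close> by (simp add: T_def cInf_lower)
      then show ?thesis using False by simp
    qed
    then show "Inf T \<le> Inf S"
      using \<open>b \<in> S\<close> by (intro cInf_greatest) auto
  qed
  have "closed (\<phi> -` {..c} \<inter> {Inf S..b})"
    using cont by (simp add: continuous_on_closed_vimage)
  moreover have "T \<subseteq> \<phi> -` {..c} \<inter> {Inf S..b}"
    using le \<open>bdd_below S\<close> by (auto simp: T_def intro: cInf_lower)
  ultimately have "closure T \<subseteq> \<phi> -` {..c} \<inter> {Inf S..b}"
    by (rule closure_minimal[rotated])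
  then show ?thesis
    using closure_contains_Inf[OF \<open>T \<noteq> {}\<close> \<open>bdd_below T\<close>] \<open>Inf T = Inf S\<close> by auto
qed

lemma continuous_on_Icc_from_convex_combination:
  fixes \<phi> :: "real \<Rightarrow> 'b::topological_space"
  assumes cont: "continuous_on {0..1} (\<lambda>e. \<phi> (e * t + (1 - e) * p))" and "t \<le> p"
  shows "continuous_on {t..p} \<phi>"
proof (cases "t = p")
  case True
  then show ?thesis by simp
next
  case False
  then have "t < p" using \<open>t \<le> p\<close> by simp
  define \<epsilon> where "\<epsilon> s = (p - s) / (p - t)" for s
  have "continuous_on {t..p} ((\<lambda>e. \<phi> (e * t + (1 - e) * p)) \<circ> \<epsilon>)"
    using \<open>t < p\<close> unfolding \<epsilon>_def
    by (intro continuous_on_compose continuous_intros continuous_on_subset[OF cont])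
       (auto simp: field_simps)
  moreover have "\<epsilon> s * t + (1 - \<epsilon> s) * p = s" for s
  proof -
    have "\<epsilon> s * (p - t) = p - s" using \<open>t < p\<close> by (simp add: \<epsilon>_def)
    then show ?thesis by (simp add: algebra_simps)
  qed
  ultimately show ?thesis by (simp add: o_def)
qed

lemma (in sigma_finite_subalgebra) AE_RN_deriv_restr_to_subalg_density:
  assumes [measurable]: "f \<in> borel_measurable F"
  shows "AE x in M. RN_deriv (restr_to_subalg M F) (restr_to_subalg (density M f) F) x
                     = RN_deriv M (density M f) x"
proof -
  have [measurable]: "f \<in> borel_measurable M"
    using measurable_from_subalg[OF subalg assms] .
  have "AE x in M. f x = RN_deriv (restr_to_subalg M F) (restr_to_subalg (density M f) F) x"
    using nn_cond_exp_F_meas[OF assms] subalg by (simp add: nn_cond_exp_def)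
  moreover have "AE x in M. f x = RN_deriv M (density M f) x"
    by (rule RN_deriv_unique) simp_all
  ultimately show ?thesis by eventually_elim simp
qed

definition reweight_density :: "'a measure \<Rightarrow> 'a set \<Rightarrow> real \<Rightarrow> 'a \<Rightarrow> real" where
  "reweight_density M E t x =
     t / measure M E * indicator E x + (1 - t) / (1 - measure M E) * indicator (space M - E) x"

definition reweight :: "'a measure \<Rightarrow> 'a set \<Rightarrow> real \<Rightarrow> 'a measure" where
  "reweight M E t = density M (\<lambda>x. ennreal (reweight_density M E t x))"

lemma
  shows sets_reweight [simp, measurable_cong]: "sets (reweight M E t) = sets M"
    and space_reweight [simp]: "space (reweight M E t) = space M"
  by (simp_all add: reweight_def)

definition binary_algebra :: "'a set \<Rightarrow> 'a set \<Rightarrow> 'a measure" where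
  "binary_algebra \<Omega> E = sigma \<Omega> {{}, E, \<Omega> - E, \<Omega>}"

lemma
  assumes "E \<subseteq> \<Omega>"
  shows sets_binary_algebra: "sets (binary_algebra \<Omega> E) = {{}, E, \<Omega> - E, \<Omega>}"
    and space_binary_algebra: "space (binary_algebra \<Omega> E) = \<Omega>"
proof -
  have "sigma_algebra \<Omega> {{}, E, \<Omega> - E, \<Omega>}"
    using assms by (rule sigma_algebra_single_set)
  then show "sets (binary_algebra \<Omega> E) = {{}, E, \<Omega> - E, \<Omega>}"
    using assms by (simp add: binary_algebra_def sigma_algebra.sigma_sets_eq)
  show "space (binary_algebra \<Omega> E) = \<Omega>"
    using assms by (auto simp: binary_algebra_def)
qed

locale nontrivial_event = prob_space +
  fixes E :: "'a set"
  assumes event: "E \<in> events"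
    and prob_pos: "0 < prob E"
    and prob_less_1: "prob E < 1"
begin

lemma subset_space: "E \<subseteq> space M"
  using event by (rule sets.sets_into_space)

lemma subalgebra_binary_algebra: "subalgebra M (binary_algebra (space M) E)"
  using event subset_space
  by (auto simp: subalgebra_def sets_binary_algebra space_binary_algebra)

lemma binary_algebra_measurable_reweight_density [measurable]:
  "(\<lambda>x. ennreal (reweight_density M E t x)) \<in> borel_measurable (binary_algebra (space M) E)"
proof -
  have [measurable]: "E \<in> sets (binary_algebra (space M) E)"
    "space M - E \<in> sets (binary_algebra (space M) E)"
    using subset_space by (simp_all add: sets_binary_algebra)
  show ?thesis
    unfolding reweight_density_def by measurable
qed

lemma borel_measurable_reweight_density [measurable]:
  "(\<lambda>x. ennreal (reweight_density M E t x)) \<in> borel_measurable M"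
  using measurable_from_subalg[OF subalgebra_binary_algebra binary_algebra_measurable_reweight_density] .

lemma reweight_density_le:
  assumes "0 \<le> t" "t \<le> 1"
  shows "reweight_density M E t x \<le> t / prob E + (1 - t) / (1 - prob E)"
  using assms prob_pos prob_less_1
  by (auto simp: reweight_density_def indicator_def)

lemma emeasure_reweight:
  assumes t: "0 \<le> t" "t \<le> 1" and A: "A \<in> events"
  shows "emeasure (reweight M E t) A
    = ennreal (t / prob E * prob (E \<inter> A) + (1 - t) / (1 - prob E) * prob ((space M - E) \<inter> A))"
proof -
  define a b where "a = t / prob E" and "b = (1 - t) / (1 - prob E)"
  have ab: "0 \<le> a" "0 \<le> b"
    using t prob_pos prob_less_1 by (simp_all add: a_def b_def)
  have "emeasure (reweight M E t) A
      = (\<integral>\<^sup>+x. ennreal (reweight_density M E t x) * indicator A x \<partial>M)"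
    using A by (simp add: reweight_def emeasure_density)
  also have "\<dots> = (\<integral>\<^sup>+x. ennreal a * indicator (E \<inter> A) x
                        + ennreal b * indicator ((space M - E) \<inter> A) x \<partial>M)"
    using ab by (intro nn_integral_cong) (auto simp: reweight_density_def a_def b_def indicator_def)
  also have "\<dots> = ennreal a * emeasure M (E \<inter> A) + ennreal b * emeasure M ((space M - E) \<inter> A)"
    using event A by (simp add: nn_integral_add nn_integral_cmult_indicator)
  also have "\<dots> = ennreal (a * prob (E \<inter> A) + b * prob ((space M - E) \<inter> A))"
    using ab by (simp add: emeasure_eq_measure ennreal_mult)
  finally show ?thesis by (simp add: a_def b_def)
qed

lemma
  assumes "0 \<le> t" "t \<le> 1"
  shows emeasure_reweight_event: "emeasure (reweight M E t) E = ennreal t"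
    and emeasure_reweight_compl: "emeasure (reweight M E t) (space M - E) = ennreal (1 - t)"
  using emeasure_reweight[OF assms event] emeasure_reweight[OF assms sets.compl_sets[OF event]]
    prob_pos prob_less_1 prob_compl[OF event]
  by (simp_all add: Diff_Int_distrib2 Int_absorb1 subset_space)

lemma prob_space_reweight:
  assumes "0 \<le> t" "t \<le> 1"
  shows "prob_space (reweight M E t)"
proof
  have "emeasure (reweight M E t) (space M)
      = emeasure (reweight M E t) E + emeasure (reweight M E t) (space M - E)"
    using event subset_space by (subst plus_emeasure) (auto simp: Un_absorb1)
  also have "\<dots> = ennreal t + ennreal (1 - t)"
    using assms by (simp only: emeasure_reweight_event emeasure_reweight_compl)
  also have "\<dots> = 1"
    using assms by (simp flip: ennreal_plus)
  finally show "emeasure (reweight M E t) (space (reweight M E t)) = 1"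
    by simp
qed

lemma measure_reweight_event: "0 \<le> t \<Longrightarrow> t \<le> 1 \<Longrightarrow> measure (reweight M E t) E = t"
  by (simp add: measure_def emeasure_reweight_event)

lemma emeasure_reweight_convex_combination:
  assumes e: "0 \<le> e" "e \<le> 1" and t: "0 \<le> t" "t \<le> 1"
  shows "ennreal e * emeasure (reweight M E t) A + ennreal (1 - e) * emeasure M A
       = emeasure (reweight M E (e * t + (1 - e) * prob E)) A"
proof (cases "A \<in> events")
  case False
  then show ?thesis by (simp add: emeasure_notin_sets)
next
  case True
  define s where "s = e * t + (1 - e) * prob E"
  have "e * t \<le> e" "(1 - e) * prob E \<le> 1 - e"
    using e t prob_less_1 by (simp_all add: mult_left_le)
  then have s: "0 \<le> s" "s \<le> 1"
    using e t prob_pos by (simp_all add: s_def)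
  define x y where "x = prob (E \<inter> A)" and "y = prob ((space M - E) \<inter> A)"
  define a b where "a = t / prob E" and "b = (1 - t) / (1 - prob E)"
  have xy: "0 \<le> x" "0 \<le> y" and ab: "0 \<le> a" "0 \<le> b"
    using t prob_pos prob_less_1 by (simp_all add: x_def y_def a_def b_def)
  have "prob A = x + y"
    unfolding x_def y_def using True event sets.sets_into_space[OF True]
    by (subst finite_measure_Union[symmetric]) (auto intro!: arg_cong[where f = prob])
  then have "ennreal e * emeasure (reweight M E t) A + ennreal (1 - e) * emeasure M A
      = ennreal (e * (a * x + b * y) + (1 - e) * (x + y))"
    using e xy ab
    by (simp add: emeasure_reweight[OF t True] emeasure_eq_measure ennreal_mult
        flip: x_def y_def a_def b_def)
  also have "e * (a * x + b * y) + (1 - e) * (x + y)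
      = s / prob E * x + (1 - s) / (1 - prob E) * y"
  proof -
    have "s / prob E = e * a + (1 - e)" "(1 - s) / (1 - prob E) = e * b + (1 - e)"
      using prob_pos prob_less_1 by (simp_all add: s_def a_def b_def field_simps)
    then show ?thesis by (simp only:) (simp add: algebra_simps)
  qed
  also have "ennreal \<dots> = emeasure (reweight M E s) A"
    by (simp add: emeasure_reweight[OF s True] x_def y_def)
  finally show ?thesis by (simp add: s_def)
qed

lemma restr_to_subalg_reweight:
  assumes "prob_space Q" "sets Q = sets M"
  shows "restr_to_subalg (reweight M E (measure Q E)) (binary_algebra (space M) E)
       = restr_to_subalg Q (binary_algebra (space M) E)"
proof -
  interpret Q: prob_space Q by fact
  define t where "t = measure Q E"
  have t: "0 \<le> t" "t \<le> 1" by (simp_all add: t_def)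
  have space_Q: "space Q = space M"
    using assms(2) by (rule sets_eq_imp_space_eq)
  have E_Q: "E \<in> sets Q"
    using assms(2) event by simp
  have "emeasure Q E = ennreal t" "emeasure Q (space M - E) = ennreal (1 - t)"
    "emeasure Q (space M) = 1"
    using Q.prob_compl[OF E_Q] Q.emeasure_space_1
    by (simp_all add: Q.emeasure_eq_measure t_def space_Q)
  moreover have "emeasure (reweight M E t) (space M) = 1"
    using prob_space.emeasure_space_1[OF prob_space_reweight[OF t]] by simp
  ultimately have "emeasure (reweight M E t) A = emeasure Q A"
    if "A \<in> {{}, E, space M - E, space M}" for A
    using that t by (auto simp: emeasure_reweight_event emeasure_reweight_compl)
  moreover have "sigma_sets (space M) {{}, E, space M - E, space M} = {{}, E, space M - E, space M}"
    using subset_space by (simp add: sigma_algebra.sigma_sets_eq sigma_algebra_single_set)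
  ultimately show ?thesis
    unfolding restr_to_subalg_def t_def[symmetric] space_Q space_reweight
      sets_binary_algebra[OF subset_space]
    using subset_space by (intro measure_of_eq) auto
qed

lemma AE_RN_deriv_restr_to_subalg_reweight:
  "AE x in M. RN_deriv (restr_to_subalg M (binary_algebra (space M) E))
                 (restr_to_subalg (reweight M E t) (binary_algebra (space M) E)) x
            = RN_deriv M (reweight M E t) x"
proof -
  interpret finite_measure_subalgebra M "binary_algebra (space M) E"
    by unfold_locales (rule subalgebra_binary_algebra)
  show ?thesis
    unfolding reweight_def by (rule AE_RN_deriv_restr_to_subalg_density) measurable
qed

end

lemma restr_eq_restr_to_subalg: "restr M (sets F) = restr_to_subalg M F"
  by (simp add: restr_def restr_to_subalg_def)

lemma is_subsigma_Borel_Theta: "is_subsigma lo hi (Borel_Theta lo hi)"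
  using sets.sigma_algebra_axioms[of "restrict_space borel (Theta lo hi)"]
  by (simp add: is_subsigma_def Borel_Theta_def space_restrict_space)

lemma is_subsigma_binary_algebra:
  assumes "E \<in> Borel_Theta lo hi"
  shows "is_subsigma lo hi (sets (binary_algebra (Theta lo hi) E))"
proof -
  interpret sigma_algebra "Theta lo hi" "Borel_Theta lo hi"
    using is_subsigma_Borel_Theta by (simp add: is_subsigma_def)
  have "E \<subseteq> Theta lo hi"
    using assms sets_into_space by blast
  then show ?thesis
    using assms by (auto simp: is_subsigma_def sets_binary_algebra sigma_algebra_single_set)
qed

lemma assumption_D_self:
  assumes "assumption_D lo hi D" "is_subsigma lo hi A" "P \<in> Delta lo hi A"
  shows "D P P = 0"
  using assms unfolding assumption_D_def by blast

lemma assumption_D_continuous_mix: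
  assumes "assumption_D lo hi D" "is_subsigma lo hi A" "P \<in> Delta lo hi A"
    and "density P f \<in> Delta lo hi A" "f \<in> borel_measurable P"
    and "\<And>x. x \<in> space P \<Longrightarrow> f x \<le> ennreal C"
  shows "continuous_on {0..1} (\<lambda>e. D (mix e (density P f) P) P)"
  using assms unfolding assumption_D_def by blast

lemma assumption_D_restr_le:
  assumes "assumption_D lo hi D" "is_subsigma lo hi A" "P \<in> Delta lo hi A" "Q \<in> Delta lo hi A"
    and "is_subsigma lo hi F" "F \<subseteq> A"
  shows "D (restr Q F) (restr P F) \<le> D Q P"
  using assms unfolding assumption_D_def by blast

lemma assumption_D_restr_eq:
  assumes "assumption_D lo hi D" "is_subsigma lo hi A" "P \<in> Delta lo hi A" "Q \<in> Delta lo hi A"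
    and "is_subsigma lo hi F" "F \<subseteq> A" "absolutely_continuous P Q"
    and "AE x in P. RN_deriv (restr P F) (restr Q F) x = RN_deriv P Q x"
  shows "D (restr Q F) (restr P F) = D Q P"
  using assms unfolding assumption_D_def by blast

locale divergence_nontrivial_event =
  fixes lo hi :: real and D :: "real measure \<Rightarrow> real measure \<Rightarrow> ennreal"
    and P :: "real measure" and E :: "real set"
  assumes assumption_D: "assumption_D lo hi D"
    and P_in_Delta: "P \<in> Delta lo hi (Borel_Theta lo hi)"
    and E_Borel: "E \<in> Borel_Theta lo hi"
    and prob_E: "0 < measure P E" "measure P E < 1"
begin

lemma space_P: "space P = Theta lo hi" and sets_P: "sets P = Borel_Theta lo hi"
  using P_in_Delta by (simp_all add: Delta_def)

sublocale nontrivial_event P E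
  using P_in_Delta E_Borel prob_E
  by (intro nontrivial_event.intro nontrivial_event_axioms.intro) (simp_all add: Delta_def)

lemma reweight_in_Delta: "0 \<le> t \<Longrightarrow> t \<le> 1 \<Longrightarrow> reweight P E t \<in> Delta lo hi (Borel_Theta lo hi)"
  using prob_space_reweight by (simp add: Delta_def space_P sets_P)

lemma divergence_reweight_le:
  assumes Q: "Q \<in> Delta lo hi (Borel_Theta lo hi)"
  shows "D (reweight P E (measure Q E)) P \<le> D Q P"
proof -
  define F where "F = binary_algebra (space P) E"
  define Q' where "Q' = reweight P E (measure Q E)"
  interpret Q: prob_space Q
    using Q by (simp add: Delta_def)
  have sets_Q: "sets Q = sets P"
    using Q by (simp add: Delta_def sets_P)
  have Q': "Q' \<in> Delta lo hi (Borel_Theta lo hi)"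
    unfolding Q'_def by (simp add: reweight_in_Delta)
  have F: "is_subsigma lo hi (sets F)" "sets F \<subseteq> Borel_Theta lo hi"
    using is_subsigma_binary_algebra[OF E_Borel] subalgebra_binary_algebra
    by (simp_all add: F_def space_P sets_P subalgebra_def)
  have "absolutely_continuous P Q'"
    unfolding Q'_def reweight_def by (rule absolutely_continuousI_density) simp
  moreover have "AE x in P. RN_deriv (restr P (sets F)) (restr Q' (sets F)) x = RN_deriv P Q' x"
    using AE_RN_deriv_restr_to_subalg_reweight by (simp add: restr_eq_restr_to_subalg F_def Q'_def)
  ultimately have "D Q' P = D (restr Q' (sets F)) (restr P (sets F))"
    using assumption_D_restr_eq[OF assumption_D is_subsigma_Borel_Theta P_in_Delta Q' F] by simp
  also have "\<dots> = D (restr Q (sets F)) (restr P (sets F))"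
    using restr_to_subalg_reweight[OF Q.prob_space_axioms sets_Q]
    by (simp add: restr_eq_restr_to_subalg F_def Q'_def)
  also have "\<dots> \<le> D Q P"
    by (rule assumption_D_restr_le[OF assumption_D is_subsigma_Borel_Theta P_in_Delta Q F])
  finally show ?thesis by (simp add: Q'_def)
qed

lemma mix_reweight:
  assumes "0 \<le> e" "e \<le> 1" "0 \<le> t" "t \<le> 1"
  shows "mix e (reweight P E t) P = reweight P E (e * t + (1 - e) * prob E)"
proof -
  have "mix e (reweight P E t) P
      = measure_of (space P) (sets P) (emeasure (reweight P E (e * t + (1 - e) * prob E)))"
    unfolding mix_def using assms by (simp add: emeasure_reweight_convex_combination)
  also have "\<dots> = reweight P E (e * t + (1 - e) * prob E)"
    using measure_of_of_measure[of "reweight P E (e * t + (1 - e) * prob E)"] by simp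
  finally show ?thesis .
qed

lemma continuous_on_divergence_reweight:
  assumes "0 \<le> t" "t \<le> prob E"
  shows "continuous_on {t..prob E} (\<lambda>s. D (reweight P E s) P)"
proof (rule continuous_on_Icc_from_convex_combination[OF _ \<open>t \<le> prob E\<close>])
  have t: "0 \<le> t" "t \<le> 1"
    using assms prob_E by simp_all
  have "continuous_on {0..1} (\<lambda>e. D (mix e (reweight P E t) P) P)"
    using reweight_in_Delta[OF t] reweight_density_le[OF t] unfolding reweight_def
    by (intro assumption_D_continuous_mix[OF assumption_D is_subsigma_Borel_Theta P_in_Delta])
      (auto intro: ennreal_leI)
  then show "continuous_on {0..1} (\<lambda>e. D (reweight P E (e * t + (1 - e) * prob E)) P)"
    using t by (simp add: mix_reweight cong: continuous_on_cong_simp)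
qed

end

theorem lemma4:
  fixes lo hi :: real
    and D :: "real measure \<Rightarrow> real measure \<Rightarrow> ennreal"
    and P :: "real measure"
    and \<eta> :: real
    and E :: "real set"
    and p pmin :: real
    and Qstar :: "real measure"
  assumes hD: "assumption_D lo hi D"
    and hP: "P \<in> Delta lo hi (Borel_Theta lo hi)"
    and h\<eta>: "\<eta> > 0"
    and hE: "E \<in> Borel_Theta lo hi"
    and hp: "0 < measure P E" "measure P E < 1"
  assumes p_def: "p = measure P E"
    and pmin_def: "pmin = Inf {measure Q E | Q. Q \<in> Delta lo hi (Borel_Theta lo hi) \<and> D Q P \<le> ennreal \<eta>}"
    and Qstar_def: "Qstar = density P (\<lambda>x. ennreal (pmin / p * indicator E x
                                     + (1 - pmin) / (1 - p) * indicator (Theta lo hi - E) x))"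
  shows "Qstar \<in> Delta lo hi (Borel_Theta lo hi) \<and> D Qstar P \<le> ennreal \<eta> \<and> measure Qstar E = pmin"
proof -
  interpret divergence_nontrivial_event lo hi D P E
    using hD hP hE hp by unfold_locales
  define S where "S = {measure Q E | Q. Q \<in> Delta lo hi (Borel_Theta lo hi) \<and> D Q P \<le> ennreal \<eta>}"
  have "p \<in> S"
    using assumption_D_self[OF hD is_subsigma_Borel_Theta hP] hP h\<eta> by (auto simp: S_def p_def)
  have "bdd_below S"
    unfolding S_def bdd_below_def by (auto intro!: exI[of _ 0])
  have "pmin = Inf S"
    by (simp add: pmin_def S_def)
  moreover have "0 \<le> Inf S"
    using \<open>p \<in> S\<close> by (intro cInf_greatest) (auto simp: S_def)
  moreover have "Inf S \<le> p"
    using \<open>p \<in> S\<close> \<open>bdd_below S\<close> by (rule cInf_lower)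
  ultimately have pmin: "pmin = Inf S" "0 \<le> pmin" "pmin \<le> p"
    by simp_all
  have "D (reweight P E pmin) P \<le> ennreal \<eta>"
    unfolding \<open>pmin = Inf S\<close>
  proof (rule le_at_Inf_if_continuous_on[OF _ \<open>p \<in> S\<close> \<open>bdd_below S\<close>])
    show "continuous_on {Inf S..p} (\<lambda>s. D (reweight P E s) P)"
      using continuous_on_divergence_reweight pmin by (simp add: p_def)
    show "D (reweight P E q) P \<le> ennreal \<eta>" if "q \<in> S" for q
      using that divergence_reweight_le by (force simp: S_def)
  qed
  moreover have "Qstar = reweight P E pmin"
    by (simp add: Qstar_def reweight_def reweight_density_def p_def space_P)
  ultimately show ?thesis
    using pmin hp by (simp add: reweight_in_Delta measure_reweight_event p_def)
qed

end
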